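(* Let $\mathbf{M}$ be a POMDP, let $k\in\mathbb{N}$, and let $\mathbf{C}=(\mathcal{Q},q_1,\gamma,\delta)$ be a deterministic $k$-FSC for $\mathbf{M}$ with corresponding instantiation $u_{\mathbf{C}}$. Then for every $t\in\mathbb{N}$ (with $t\ge 2$), \[ H^{\mathbf{C}}(S_{t} \mid S^{t-1})= H^{u_{\mathbf{C}}}(S_{\mathbf{M},k,t} \mid S_{\mathbf{M},k, t-1}). \]
   Context: A POMDP is $\mathbf{M}=(\mathcal{S},s_I,\mathcal{A},P,\mathcal{Z},O,R)$ with finite state set $\mathcal{S}$, initial state $s_I$, finite action set $\mathcal{A}$, transition function $P_{s,a,s'}=P(s'|s,a)$, finite observation set $\mathcal{Z}$, observation function $O_{s,z}=O(z|s)$, reward $R:\mathcal{S}\times\mathcal{A}\to\mathbb{R}$. A $k$-finite-state controller ($k$-FSC) is $\mathbf{C}=(\mathcal{Q},q_1,\gamma,\delta)$ with memory states $\mathcal{Q}=\{q_1,\ldots,q_k\}$, initial memory state $q_1$, decision function $\gamma:\mathcal{Q}\times\mathcal{Z}\to\Delta(\mathcal{A})$ and memory transition function $\delta:\mathcal{Q}\times\mathcal{Z}\times\mathcal{A}\to\Delta(\mathcal{Q})$. Under $\mathbf{C}$ the POMDP evolves as: $S_1=s_I$, memory $Q_1=q_1$; at time $t$, $Z_t\sim O(\cdot|S_t)$, $A_t\sim\gamma(\cdot|Q_t,Z_t)$, $S_{t+1}\sim P(\cdot|S_t,A_t)$, $Q_{t+1}\sim\delta(\cdot|Q_t,Z_t,A_t)$.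 $H^{\mathbf{C}}(S_t\mid S^{t-1})$ is the conditional entropy of $S_t$ given $S^{t-1}=(S_1,\ldots,S_{t-1})$ in this process. For $q\in\mathcal{Q}$ let $Succ(q)=\{q'\in\mathcal{Q}:\delta(q'|q,z,a)>0 \text{ for some } z\in\mathcal{Z},a\in\mathcal{A}\}$; $\mathbf{C}$ is a deterministic $k$-FSC if $|Succ(q)|=1$ for all $q\in\mathcal{Q}$. The instantiation $u_{\mathbf{C}}$ determines the Markov chain $\mathbf{D}_{\mathbf{M},k}[u_{\mathbf{C}}]$ with state space $\mathcal{S}\times\mathcal{Q}$, initial state $\langle s_I,q_1\rangle$ and transition probabilities \[ P^{u_{\mathbf{C}}}_{\mathbf{M},k}(\langle s',q'\rangle\mid\langle s,q\rangle)=\sum_{a\in\mathcal{A}}\sum_{z\in\mathcal{Z}} O_{s,z}\,P_{s,a,s'}\,\gamma(a|q,z)\,\delta(q'|q,z,a). \] $(S_{\mathbf{M},k,1},S_{\mathbf{M},k,2},\ldots)$ is the state sequence of this Markov chain, and $H^{u_{\mathbf{C}}}(S_{\mathbf{M},k,t}\mid S_{\mathbf{M},k,t-1})$ is the corresponding conditional entropy (convention $0\log 0=0$). *)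

theory Defs
  imports Complex_Main
begin

record ('s, 'a, 'z) pomdp =
  p_init :: "'s"
  p_trans :: "'s \<Rightarrow> 'a \<Rightarrow> 's \<Rightarrow> real"    (* P(s'|s,a) = p_trans s a s' *)
  p_obs :: "'s \<Rightarrow> 'z \<Rightarrow> real"              (* O(z|s) = p_obs s z *)
  p_reward :: "'s \<Rightarrow> 'a \<Rightarrow> real"

definition is_pomdp :: "('s::finite, 'a::finite, 'z::finite) pomdp \<Rightarrow> bool" where
  "is_pomdp M \<longleftrightarrow>
     (\<forall>s a s'. p_trans M s a s' \<ge> 0) \<and> (\<forall>s a. (\<Sum>s'\<in>UNIV. p_trans M s a s') = 1) \<and>
     (\<forall>s z. p_obs M s z \<ge> 0) \<and> (\<forall>s. (\<Sum>z\<in>UNIV. p_obs M s z) = 1)"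

record ('q, 'a, 'z) fsc =
  c_init :: "'q"
  c_dec :: "'q \<Rightarrow> 'z \<Rightarrow> 'a \<Rightarrow> real"          (* gamma(a|q,z) *)
  c_mem :: "'q \<Rightarrow> 'z \<Rightarrow> 'a \<Rightarrow> 'q \<Rightarrow> real"   (* delta(q'|q,z,a) *)

definition is_fsc :: "('q::finite, 'a::finite, 'z::finite) fsc \<Rightarrow> bool" where
  "is_fsc C \<longleftrightarrow>
     (\<forall>q z a. c_dec C q z a \<ge> 0) \<and> (\<forall>q z. (\<Sum>a\<in>UNIV. c_dec C q z a) = 1) \<and>
     (\<forall>q z a q'. c_mem C q z a q' \<ge> 0) \<and> (\<forall>q z a. (\<Sum>q'\<in>UNIV. c_mem C q z a q') = 1)"

definition Succ :: "('q, 'a, 'z) fsc \<Rightarrow> 'q \<Rightarrow> 'q set" where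
  "Succ C q = {q'. \<exists>z a. c_mem C q z a q' > 0}"

definition deterministic_fsc :: "('q, 'a, 'z) fsc \<Rightarrow> bool" where
  "deterministic_fsc C \<longleftrightarrow> (\<forall>q. card (Succ C q) = 1)"

definition lists_len :: "nat \<Rightarrow> 'x list set" where
  "lists_len n = {xs. length xs = n}"

text \<open>Conditional entropy H(Y|X) of a joint distribution f(x,y) on X \<times> Y,
  with the convention 0 log 0 = 0 (logarithm base 2).\<close>
definition cond_ent :: "('x \<Rightarrow> 'y \<Rightarrow> real) \<Rightarrow> 'x set \<Rightarrow> 'y set \<Rightarrow> real" where
  "cond_ent f X Y = - (\<Sum>x\<in>X. \<Sum>y\<in>Y.
      (if f x y = 0 then 0 else f x y * log 2 (f x y / (\<Sum>y'\<in>Y. f x y'))))"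

text \<open>Probability, in the POMDP process under C, that (S_1,...,S_n) = ss (length ss = n \<ge> 1):
  marginal of the joint law of (S_1..S_n, Q_1..Q_n, Z_1..Z_{n-1}, A_1..A_{n-1}).\<close>
definition state_seq_prob ::
  "('s::finite, 'a::finite, 'z::finite) pomdp \<Rightarrow> ('q::finite, 'a, 'z) fsc \<Rightarrow> nat \<Rightarrow> 's list \<Rightarrow> real" where
  "state_seq_prob M C n ss =
     (\<Sum>qs\<in>lists_len n. \<Sum>zs\<in>lists_len (n - 1). \<Sum>as\<in>lists_len (n - 1).
        (if ss ! 0 = p_init M \<and> qs ! 0 = c_init C then
           (\<Prod>i<n - 1. p_obs M (ss ! i) (zs ! i) * c_dec C (qs ! i) (zs ! i) (as ! i)
                        * p_trans M (ss ! i) (as ! i) (ss ! (i + 1))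
                        * c_mem C (qs ! i) (zs ! i) (as ! i) (qs ! (i + 1)))
         else 0))"

definition H_C :: "('s::finite, 'a::finite, 'z::finite) pomdp \<Rightarrow> ('q::finite, 'a, 'z) fsc \<Rightarrow> nat \<Rightarrow> real" where
  "H_C M C t = cond_ent (\<lambda>ss s. state_seq_prob M C t (ss @ [s])) (lists_len (t - 1)) UNIV"

definition mc_kernel ::
  "('s::finite, 'a::finite, 'z::finite) pomdp \<Rightarrow> ('q::finite, 'a, 'z) fsc \<Rightarrow> 's \<times> 'q \<Rightarrow> 's \<times> 'q \<Rightarrow> real" where
  "mc_kernel M C x y = (case x of (s, q) \<Rightarrow> case y of (s', q') \<Rightarrow>
      (\<Sum>a\<in>UNIV. \<Sum>z\<in>UNIV. p_obs M s z * p_trans M s a s' * c_dec C q z a * c_mem C q z a q'))"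

text \<open>mc_dist M C n = distribution of the chain state at time n+1 (time 1 = initial state).\<close>
fun mc_dist ::
  "('s::finite, 'a::finite, 'z::finite) pomdp \<Rightarrow> ('q::finite, 'a, 'z) fsc \<Rightarrow> nat \<Rightarrow> 's \<times> 'q \<Rightarrow> real" where
  "mc_dist M C 0 x = (if x = (p_init M, c_init C) then 1 else 0)"
| "mc_dist M C (Suc n) y = (\<Sum>x\<in>UNIV. mc_dist M C n x * mc_kernel M C x y)"

definition H_MC :: "('s::finite, 'a::finite, 'z::finite) pomdp \<Rightarrow> ('q::finite, 'a, 'z) fsc \<Rightarrow> nat \<Rightarrow> real" where
  "H_MC M C t = cond_ent (\<lambda>x y. mc_dist M C (t - 2) x * mc_kernel M C x y) UNIV UNIV"

end

theory Submission
  imports Defs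
begin

(* Under a deterministic controller the memory does not depend on the run: it follows the
   fixed path q_1, \<sigma> q_1, \<sigma> (\<sigma> q_1), ..., where \<sigma> q is the unique successor of q.
   Hence the states alone form a time-inhomogeneous Markov chain, whose step at time n uses the
   kernel K_n(s, s') = \<Sum>_{a,z} O(z|s) \<gamma>(a|q_n, z) P(s'|s, a), while the product chain on
   S \<times> Q sits on {(s, q_n)} and moves by K_n in its first component. Both conditional entropies
   therefore equal the expected row entropy \<Sum>_s Pr[S_{t-1} = s] H(K_{t-1}(s, \<cdot>)). *)

lemma finite_lists_len: "finite (lists_len n :: 'x::finite list set)"
  using finite_lists_length_eq[of "UNIV :: 'x set" n] by (simp add: lists_len_def)

lemma lists_len_0: "lists_len 0 = {[]}"
  by (auto simp: lists_len_def)

lemma sum_lists_len_Suc: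
  fixes F :: "'x::finite list \<Rightarrow> 'b::comm_monoid_add"
  shows "(\<Sum>ys\<in>lists_len (Suc n). F ys) = (\<Sum>xs\<in>lists_len n. \<Sum>x\<in>UNIV. F (xs @ [x]))"
proof -
  have img: "lists_len (Suc n) = (\<lambda>(xs, x :: 'x). xs @ [x]) ` (lists_len n \<times> UNIV)"
  proof (intro equalityI subsetI)
    fix ys :: "'x list" assume "ys \<in> lists_len (Suc n)"
    then have "ys = butlast ys @ [last ys]" "butlast ys \<in> lists_len n"
      by (auto simp: lists_len_def intro!: append_butlast_last_id[symmetric])
    then show "ys \<in> (\<lambda>(xs, x). xs @ [x]) ` (lists_len n \<times> UNIV)"
      by (intro image_eqI[of _ _ "(butlast ys, last ys)"]) auto
  qed (auto simp: lists_len_def)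
  have inj: "inj_on (\<lambda>(xs, x). xs @ [x]) (lists_len n \<times> (UNIV :: 'x set))"
    by (auto simp: inj_on_def)
  have "(\<Sum>ys\<in>lists_len (Suc n). F ys) = (\<Sum>(xs, x)\<in>lists_len n \<times> UNIV. F (xs @ [x]))"
    unfolding img sum.reindex[OF inj] by (simp add: comp_def case_prod_unfold)
  then show ?thesis
    by (simp add: sum.cartesian_product)
qed

lemma sum_lists_len_prod:
  fixes h :: "nat \<Rightarrow> 'x::finite \<Rightarrow> 'b::comm_semiring_1"
  shows "(\<Sum>xs\<in>lists_len n. \<Prod>i<n. h i (xs ! i)) = (\<Prod>i<n. \<Sum>x\<in>UNIV. h i x)"
proof (induction n)
  case 0
  then show ?case by (simp add: lists_len_0)
next
  case (Suc n)
  have snoc: "(\<Prod>i<Suc n. h i ((xs @ [x]) ! i)) = (\<Prod>i<n. h i (xs ! i)) * h n x"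
    if "xs \<in> lists_len n" for xs x
    using that by (simp add: lists_len_def nth_append)
  have "(\<Sum>ys\<in>lists_len (Suc n). \<Prod>i<Suc n. h i (ys ! i))
      = (\<Sum>xs\<in>lists_len n. \<Sum>x\<in>UNIV. (\<Prod>i<n. h i (xs ! i)) * h n x)"
    by (simp only: sum_lists_len_Suc snoc cong: sum.cong)
  also have "\<dots> = (\<Sum>xs\<in>lists_len n. \<Prod>i<n. h i (xs ! i)) * (\<Sum>x\<in>UNIV. h n x)"
    by (rule sum_product[symmetric])
  finally show ?case by (simp add: Suc.IH)
qed

lemma sum_UNIV_pair:
  fixes f :: "'x::finite \<times> 'y::finite \<Rightarrow> 'b::comm_monoid_add"
  shows "(\<Sum>p\<in>UNIV. f p) = (\<Sum>x\<in>UNIV. \<Sum>y\<in>UNIV. f (x, y))"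
  by (simp add: UNIV_Times_UNIV[symmetric] sum.cartesian_product del: UNIV_Times_UNIV)

definition shannon_entropy :: "('y \<Rightarrow> real) \<Rightarrow> 'y set \<Rightarrow> real" where
  "shannon_entropy p Y = - (\<Sum>y\<in>Y. p y * log 2 (p y))"

lemma cond_ent_eq_expected_entropy:
  assumes stochastic: "\<And>x. x \<in> X \<Longrightarrow> (\<Sum>y\<in>Y. K x y) = 1"
    and joint: "\<And>x y. x \<in> X \<Longrightarrow> y \<in> Y \<Longrightarrow> f x y = c x * K x y"
  shows "cond_ent f X Y = (\<Sum>x\<in>X. c x * shannon_entropy (K x) Y)"
proof -
  have "(\<Sum>y\<in>Y. (if f x y = 0 then 0 else f x y * log 2 (f x y / (\<Sum>y'\<in>Y. f x y'))))
      = c x * (\<Sum>y\<in>Y. K x y * log 2 (K x y))" if x: "x \<in> X" for x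
  proof -
    have marginal: "(\<Sum>y'\<in>Y. f x y') = c x"
      using x by (simp add: joint stochastic flip: sum_distrib_left)
    show ?thesis
      unfolding sum_distrib_left marginal using x by (intro sum.cong) (auto simp: joint)
  qed
  then show ?thesis
    by (simp add: cond_ent_def shannon_entropy_def sum_negf)
qed

lemma lists_len_iterates_iff:
  assumes "qs \<in> lists_len (Suc n)"
  shows "(qs ! 0 = q \<and> (\<forall>i<n. qs ! Suc i = f (qs ! i)))
           \<longleftrightarrow> qs = map (\<lambda>i. (f ^^ i) q) [0..<Suc n]"
proof
  assume "qs ! 0 = q \<and> (\<forall>i<n. qs ! Suc i = f (qs ! i))"
  then have "i < Suc n \<longrightarrow> qs ! i = (f ^^ i) q" for i
    by (induction i) auto
  with assms show "qs = map (\<lambda>i. (f ^^ i) q) [0..<Suc n]"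
    by (intro nth_equalityI) (auto simp: lists_len_def simp del: upt_Suc)
qed (simp del: upt_Suc)

definition mem_succ :: "('q, 'a, 'z) fsc \<Rightarrow> 'q \<Rightarrow> 'q" where
  "mem_succ C q = the_elem (Succ C q)"

text \<open>As in \<^const>\<open>mc_dist\<close>, index \<open>n\<close> refers to time \<open>n + 1\<close>: \<open>mem_state C n\<close> is the
  memory state \<open>q\<^sub>n\<^sub>+\<^sub>1\<close> and \<open>state_dist M C n\<close> below the law of \<open>S\<^sub>n\<^sub>+\<^sub>1\<close>.\<close>

definition mem_state :: "('q, 'a, 'z) fsc \<Rightarrow> nat \<Rightarrow> 'q" where
  "mem_state C n = (mem_succ C ^^ n) (c_init C)"

lemma c_mem_deterministic:
  fixes C :: "('q::finite, 'a::finite, 'z::finite) fsc"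
  assumes "is_fsc C" and "deterministic_fsc C"
  shows "c_mem C q z a q' = (if q' = mem_succ C q then 1 else 0)"
proof -
  obtain b where b: "Succ C q = {b}"
    using assms(2) card_1_singletonE unfolding deterministic_fsc_def by blast
  have nonneg: "c_mem C q z a r \<ge> 0" for r
    using assms(1) by (simp add: is_fsc_def)
  have zero: "c_mem C q z a r = 0" if "r \<noteq> b" for r
  proof -
    have "\<not> c_mem C q z a r > 0"
      using b that unfolding Succ_def by blast
    with nonneg[of r] show ?thesis by linarith
  qed
  have "1 = (\<Sum>r\<in>UNIV. c_mem C q z a r)"
    using assms(1) by (simp add: is_fsc_def)
  also have "\<dots> = c_mem C q z a b"
    using zero by (subst sum.remove[of _ b]) (auto intro: sum.neutral)
  finally show ?thesis
    using b zero by (auto simp: mem_succ_def)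
qed

definition state_kernel ::
  "('s::finite, 'a::finite, 'z::finite) pomdp \<Rightarrow> ('q, 'a, 'z) fsc \<Rightarrow> 'q \<Rightarrow> 's \<Rightarrow> 's \<Rightarrow> real" where
  "state_kernel M C q s s' = (\<Sum>a\<in>UNIV. \<Sum>z\<in>UNIV. p_obs M s z * p_trans M s a s' * c_dec C q z a)"

lemma state_kernel_sum:
  fixes M :: "('s::finite, 'a::finite, 'z::finite) pomdp" and C :: "('q::finite, 'a, 'z) fsc"
  assumes "is_pomdp M" and "is_fsc C"
  shows "(\<Sum>s'\<in>UNIV. state_kernel M C q s s') = 1"
proof -
  have "(\<Sum>s'\<in>UNIV. state_kernel M C q s s')
      = (\<Sum>a\<in>UNIV. \<Sum>z\<in>UNIV. \<Sum>s'\<in>UNIV. p_obs M s z * p_trans M s a s' * c_dec C q z a)"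
    unfolding state_kernel_def by (subst sum.swap) (intro sum.cong refl sum.swap)
  also have "\<dots> = (\<Sum>z\<in>UNIV. \<Sum>a\<in>UNIV. p_obs M s z * c_dec C q z a * (\<Sum>s'\<in>UNIV. p_trans M s a s'))"
    by (subst sum.swap) (simp add: sum_distrib_left mult_ac)
  also have "\<dots> = 1"
    using assms by (simp add: is_pomdp_def is_fsc_def flip: sum_distrib_left)
  finally show ?thesis .
qed

lemma mc_kernel_deterministic:
  fixes M :: "('s::finite, 'a::finite, 'z::finite) pomdp" and C :: "('q::finite, 'a, 'z) fsc"
  assumes "is_fsc C" and "deterministic_fsc C"
  shows "mc_kernel M C (s, q) (s', q') = (if q' = mem_succ C q then state_kernel M C q s s' else 0)"
  by (simp add: mc_kernel_def state_kernel_def c_mem_deterministic[OF assms])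

lemma mc_kernel_sum:
  fixes M :: "('s::finite, 'a::finite, 'z::finite) pomdp" and C :: "('q::finite, 'a, 'z) fsc"
  assumes "is_pomdp M" and "is_fsc C" and "deterministic_fsc C"
  shows "(\<Sum>y\<in>UNIV. mc_kernel M C x y) = 1"
  using state_kernel_sum[OF assms(1,2)]
  by (cases x) (simp add: sum_UNIV_pair mc_kernel_deterministic[OF assms(2,3)])

lemma state_seq_prob_deterministic:
  fixes M :: "('s::finite, 'a::finite, 'z::finite) pomdp" and C :: "('q::finite, 'a, 'z) fsc"
  assumes "is_fsc C" and "deterministic_fsc C" and "length ss = Suc n"
  shows "state_seq_prob M C (Suc n) ss =
    (if ss ! 0 = p_init M then \<Prod>i<n. state_kernel M C (mem_state C i) (ss ! i) (ss ! Suc i) else 0)"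
proof -
  define path where "path = map (mem_state C) [0..<Suc n]"
  define h where "h i q z a = p_obs M (ss ! i) z * c_dec C q z a * p_trans M (ss ! i) a (ss ! Suc i)"
    for i q z a
  have path_iff: "qs ! 0 = c_init C \<and> (\<forall>i<n. qs ! Suc i = mem_succ C (qs ! i)) \<longleftrightarrow> qs = path"
    if "qs \<in> lists_len (Suc n)" for qs
    using lists_len_iterates_iff[OF that] unfolding path_def mem_state_def by simp
  have path_len: "path \<in> lists_len (Suc n)"
    by (simp add: path_def lists_len_def)
  have path_prod: "(\<Prod>i<n. h i (path ! i) (zs ! i) (as ! i))
      = (\<Prod>i<n. h i (mem_state C i) (zs ! i) (as ! i))"
    for zs as by (intro prod.cong) (simp_all add: path_def del: upt_Suc)
  \<comment> \<open>Since \<open>c_mem\<close> is the indicator of the successor, only the memory sequence \<open>path\<close> has weight.\<close>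
  have c_mem_prod: "(\<Prod>i<n. p_obs M (ss ! i) (zs ! i) * c_dec C (qs ! i) (zs ! i) (as ! i)
        * p_trans M (ss ! i) (as ! i) (ss ! (i + 1)) * c_mem C (qs ! i) (zs ! i) (as ! i) (qs ! (i + 1)))
      = (if \<forall>i<n. qs ! Suc i = mem_succ C (qs ! i) then \<Prod>i<n. h i (qs ! i) (zs ! i) (as ! i) else 0)"
    for qs :: "'q list" and zs :: "'z list" and as :: "'a list"
    by (auto simp: c_mem_deterministic[OF assms(1,2)] h_def intro!: prod.cong prod_zero)
  have "state_seq_prob M C (Suc n) ss = (\<Sum>qs\<in>lists_len (Suc n). if qs = path then
      (if ss ! 0 = p_init M then \<Sum>zs\<in>lists_len n. \<Sum>as\<in>lists_len n. \<Prod>i<n. h i (qs ! i) (zs ! i) (as ! i)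
       else 0) else 0)"
    unfolding state_seq_prob_def diff_Suc_1 c_mem_prod
    by (intro sum.cong refl) (auto simp: if_if_eq_conj path_iff)
  also have "\<dots> = (if ss ! 0 = p_init M then
      \<Sum>zs\<in>lists_len n. \<Sum>as\<in>lists_len n. \<Prod>i<n. h i (mem_state C i) (zs ! i) (as ! i) else 0)"
    using path_len by (simp add: sum.delta' finite_lists_len path_prod)
  also have "(\<Sum>zs\<in>lists_len n. \<Sum>as\<in>lists_len n. \<Prod>i<n. h i (mem_state C i) (zs ! i) (as ! i))
      = (\<Prod>i<n. \<Sum>z\<in>UNIV. \<Sum>a\<in>UNIV. h i (mem_state C i) z a)"
  proof -
    have "(\<Sum>as\<in>lists_len n. \<Prod>i<n. h i (mem_state C i) (zs ! i) (as ! i))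
        = (\<Prod>i<n. \<Sum>a\<in>UNIV. h i (mem_state C i) (zs ! i) a)" for zs :: "'z list"
      by (rule sum_lists_len_prod)
    then show ?thesis
      using sum_lists_len_prod[of "\<lambda>i z. \<Sum>a\<in>UNIV. h i (mem_state C i) z a" n] by simp
  qed
  also have "\<dots> = (\<Prod>i<n. state_kernel M C (mem_state C i) (ss ! i) (ss ! Suc i))"
    unfolding state_kernel_def h_def by (intro prod.cong refl, subst sum.swap) (simp add: mult_ac)
  finally show ?thesis .
qed

lemma state_seq_prob_snoc:
  fixes M :: "('s::finite, 'a::finite, 'z::finite) pomdp" and C :: "('q::finite, 'a, 'z) fsc"
  assumes "is_fsc C" and "deterministic_fsc C" and "length xs = Suc n"
  shows "state_seq_prob M C (Suc (Suc n)) (xs @ [x]) =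
         state_seq_prob M C (Suc n) xs * state_kernel M C (mem_state C n) (last xs) x"
proof -
  have "(\<Prod>i<Suc n. state_kernel M C (mem_state C i) ((xs @ [x]) ! i) ((xs @ [x]) ! Suc i))
      = (\<Prod>i<n. state_kernel M C (mem_state C i) (xs ! i) (xs ! Suc i))
        * state_kernel M C (mem_state C n) (last xs) x"
  proof -
    have "(\<Prod>i<n. state_kernel M C (mem_state C i) ((xs @ [x]) ! i) ((xs @ [x]) ! Suc i))
        = (\<Prod>i<n. state_kernel M C (mem_state C i) (xs ! i) (xs ! Suc i))"
      using assms(3) by (intro prod.cong) (simp_all add: nth_append)
    moreover have "last xs = xs ! n"
      using assms(3) by (cases xs rule: rev_cases) auto
    ultimately show ?thesis
      using assms(3) by (simp add: nth_append)
  qed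
  with assms show ?thesis
    by (simp add: state_seq_prob_deterministic nth_append)
qed

fun state_dist ::
  "('s::finite, 'a::finite, 'z::finite) pomdp \<Rightarrow> ('q::finite, 'a, 'z) fsc \<Rightarrow> nat \<Rightarrow> 's \<Rightarrow> real" where
  "state_dist M C 0 s = (if s = p_init M then 1 else 0)"
| "state_dist M C (Suc n) s' = (\<Sum>s\<in>UNIV. state_dist M C n s * state_kernel M C (mem_state C n) s s')"

lemma sum_state_seq_prob_last:
  fixes M :: "('s::finite, 'a::finite, 'z::finite) pomdp" and C :: "('q::finite, 'a, 'z) fsc"
  assumes "is_fsc C" and "deterministic_fsc C"
  shows "(\<Sum>ss\<in>lists_len (Suc n). state_seq_prob M C (Suc n) ss * g (last ss))
       = (\<Sum>s\<in>UNIV. state_dist M C n s * g s)"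
proof (induction n arbitrary: g)
  case 0
  then show ?case
    by (simp add: sum_lists_len_Suc lists_len_0 state_seq_prob_deterministic[OF assms] cong: if_cong)
next
  case (Suc n)
  have "(\<Sum>ss\<in>lists_len (Suc (Suc n)). state_seq_prob M C (Suc (Suc n)) ss * g (last ss))
      = (\<Sum>xs\<in>lists_len (Suc n). state_seq_prob M C (Suc n) xs
           * (\<Sum>x\<in>UNIV. state_kernel M C (mem_state C n) (last xs) x * g x))"
    by (subst sum_lists_len_Suc, intro sum.cong refl)
      (simp add: state_seq_prob_snoc[OF assms] lists_len_def sum_distrib_left mult.assoc)
  also have "\<dots> = (\<Sum>s\<in>UNIV. state_dist M C n s
                     * (\<Sum>x\<in>UNIV. state_kernel M C (mem_state C n) s x * g x))"
    by (rule Suc.IH)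
  also have "\<dots> = (\<Sum>x\<in>UNIV. \<Sum>s\<in>UNIV. state_dist M C n s * (state_kernel M C (mem_state C n) s x * g x))"
    unfolding sum_distrib_left by (rule sum.swap)
  also have "\<dots> = (\<Sum>x\<in>UNIV. state_dist M C (Suc n) x * g x)"
    by (simp only: state_dist.simps sum_distrib_right mult.assoc)
  finally show ?case .
qed

lemma mc_dist_deterministic:
  fixes M :: "('s::finite, 'a::finite, 'z::finite) pomdp" and C :: "('q::finite, 'a, 'z) fsc"
  assumes "is_fsc C" and "deterministic_fsc C"
  shows "mc_dist M C n (s, q) = (if q = mem_state C n then state_dist M C n s else 0)"
proof (induction n arbitrary: s q)
  case 0
  then show ?case by (auto simp: mem_state_def)
next
  case (Suc n)
  have "mc_dist M C (Suc n) (s, q)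
      = (\<Sum>s0\<in>UNIV. \<Sum>q0\<in>UNIV. mc_dist M C n (s0, q0) * mc_kernel M C (s0, q0) (s, q))"
    by (simp add: sum_UNIV_pair)
  also have "\<dots> = (\<Sum>s0\<in>UNIV. state_dist M C n s0 * mc_kernel M C (s0, mem_state C n) (s, q))"
    by (simp add: Suc.IH if_distrib[of "\<lambda>x. x * _"] sum.delta cong: if_cong)
  also have "\<dots> = (if q = mem_state C (Suc n) then state_dist M C (Suc n) s else 0)"
    by (simp add: mc_kernel_deterministic[OF assms] mem_state_def)
  finally show ?case .
qed

lemma shannon_entropy_mc_kernel:
  fixes M :: "('s::finite, 'a::finite, 'z::finite) pomdp" and C :: "('q::finite, 'a, 'z) fsc"
  assumes "is_fsc C" and "deterministic_fsc C"
  shows "shannon_entropy (mc_kernel M C (s, q)) UNIV = shannon_entropy (state_kernel M C q s) UNIV"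
proof -
  have "mc_kernel M C (s, q) (s', q') * log 2 (mc_kernel M C (s, q) (s', q'))
      = (if q' = mem_succ C q then state_kernel M C q s s' * log 2 (state_kernel M C q s s') else 0)"
    for s' q'
    by (simp add: mc_kernel_deterministic[OF assms])
  then show ?thesis
    by (simp add: shannon_entropy_def sum_UNIV_pair sum.delta')
qed

lemma H_C_deterministic:
  fixes M :: "('s::finite, 'a::finite, 'z::finite) pomdp" and C :: "('q::finite, 'a, 'z) fsc"
  assumes "is_pomdp M" and "is_fsc C" and "deterministic_fsc C"
  shows "H_C M C (Suc (Suc n))
    = (\<Sum>s\<in>UNIV. state_dist M C n s * shannon_entropy (state_kernel M C (mem_state C n) s) UNIV)"
proof -
  have "H_C M C (Suc (Suc n)) = (\<Sum>ss\<in>lists_len (Suc n). state_seq_prob M C (Suc n) ss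
      * shannon_entropy (state_kernel M C (mem_state C n) (last ss)) UNIV)"
    unfolding H_C_def diff_Suc_1
    by (rule cond_ent_eq_expected_entropy)
      (simp_all add: state_kernel_sum[OF assms(1,2)] state_seq_prob_snoc[OF assms(2,3)] lists_len_def)
  then show ?thesis
    by (simp add: sum_state_seq_prob_last[OF assms(2,3),
          where g = "\<lambda>s. shannon_entropy (state_kernel M C (mem_state C n) s) UNIV"])
qed

lemma H_MC_deterministic:
  fixes M :: "('s::finite, 'a::finite, 'z::finite) pomdp" and C :: "('q::finite, 'a, 'z) fsc"
  assumes "is_pomdp M" and "is_fsc C" and "deterministic_fsc C"
  shows "H_MC M C (Suc (Suc n))
    = (\<Sum>s\<in>UNIV. state_dist M C n s * shannon_entropy (state_kernel M C (mem_state C n) s) UNIV)"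
proof -
  have "H_MC M C (Suc (Suc n)) = (\<Sum>x\<in>UNIV. mc_dist M C n x * shannon_entropy (mc_kernel M C x) UNIV)"
    unfolding H_MC_def by (rule cond_ent_eq_expected_entropy) (simp_all add: mc_kernel_sum[OF assms])
  then show ?thesis
    by (simp add: sum_UNIV_pair mc_dist_deterministic[OF assms(2,3)]
        shannon_entropy_mc_kernel[OF assms(2,3)] if_distrib[of "\<lambda>x. x * _"] sum.delta'
        cong: if_cong)
qed

theorem proposition1:
  fixes M :: "('s::finite, 'a::finite, 'z::finite) pomdp"
    and C :: "('q::finite, 'a, 'z) fsc"
    and k t :: nat
  assumes "is_pomdp M"
    and "is_fsc C"
    and "card (UNIV :: 'q set) = k"
    and "deterministic_fsc C"
    and "t \<ge> 2"
  shows "H_C M C t = H_MC M C t"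
proof -
  \<comment> \<open>The hypothesis on \<open>k\<close> only names the number of memory states.\<close>
  obtain n where "t = Suc (Suc n)"
    using \<open>t \<ge> 2\<close> by (metis add_2_eq_Suc le_Suc_ex)
  then show ?thesis
    using H_C_deterministic[OF assms(1,2,4)] H_MC_deterministic[OF assms(1,2,4)] by simp
qed

end
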